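(* Let $\lambda$ be a strict partition of $n$, let $T$ be a standard shifted tableau of shape $\lambda$, and let $D\subseteq[n-1]$ be such that $\mathrm{Peak}(T)\subseteq D\triangle(D+1)$. Then \[\bigl|\{S \text{ marked-standard shifted tableau of shape } \lambda\,:\,\mathrm{Des}(S)=D,\ |S|=T\}\bigr| = 2^{|\mathrm{Peak}(T)|+1-\ell(\lambda)}.\]
   Context: For $m\le n$ let $[m,n]=\{m,\dots,n\}$ and $[n]=[1,n]$. A partition is strict if its parts are distinct; $\ell(\lambda)$ is the number of parts. The shifted shape of a strict partition $\lambda=(\lambda_1,\dots,\lambda_r)$ has $\lambda_i$ boxes in row $i$, shifted $i-1$ units to the right relative to the top row. A (marked) shifted tableau of shape $\lambda$ is a filling of the shifted shape with letters from $1'<1<2'<2<\cdots$ such that rows and columns weakly increase, each unprimed $k$ appears at most once per column, each $k'$ appears at most once per row, and there are no primed entries on the main diagonal. It is standard if it contains each of $1,\dots,n$ exactly once (unprimed), and marked-standard if each of $1,\dots,n$ appears exactly once, possibly primed. For a marked shifted tableau $S$, $|S|$ denotes the tableau obtained by removing all primes. For a (marked-)standard shifted tableau $T$ of size $n$, its descent set is $\mathrm{Des}(T)=\{i\in[n-1]: i \text{ is strictly higher (in an upper row) than } i+1 \text{ or } (i+1)' \text{ in } T, \text{ or } (i+1)' \text{ is weakly higher than } i \text{ or } i' \text{ in } T\}$. For $D\subseteq[n-1]$, the peak set is $\mathrm{Peak}(D)=\{i\in D\setminus\{1\}: i-1\notin D\}$, and $\mathrm{Peak}(T):=\mathrm{Peak}(\mathrm{Des}(T))$.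 Also $D+1=\{d+1:d\in D\}$ and $D\triangle(D+1)=(D\setminus(D+1))\cup((D+1)\setminus D)$. *)

theory Defs
  imports Complex_Main
begin

text \<open>Letters: a pair (k, p) stands for k if p = False and for k' if p = True.
  Cells of a shifted shape are pairs (row, column), 0-indexed; row i occupies
  columns i, ..., i + lam!i - 1. The main diagonal consists of cells (i,i).
  A row with smaller index is "higher".\<close>

type_synonym letter = "nat \<times> bool"
type_synonym cell = "nat \<times> nat"

definition strict_partition :: "nat list \<Rightarrow> bool" where
  "strict_partition lam \<longleftrightarrow> sorted_wrt (>) lam \<and> (\<forall>x\<in>set lam. 0 < x)"

definition shifted_cells :: "nat list \<Rightarrow> cell set" where
  "shifted_cells lam = {(i,j). i < length lam \<and> i \<le> j \<and> j < i + lam ! i}"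

text \<open>Total order 1' < 1 < 2' < 2 < ... via a rank.\<close>
definition letter_rank :: "letter \<Rightarrow> nat" where
  "letter_rank x = 2 * fst x - (if snd x then 1 else 0)"

definition letter_le :: "letter \<Rightarrow> letter \<Rightarrow> bool" where
  "letter_le x y \<longleftrightarrow> letter_rank x \<le> letter_rank y"

definition marked_shifted_tableau :: "nat list \<Rightarrow> (cell \<Rightarrow> letter) \<Rightarrow> bool" where
  "marked_shifted_tableau lam S \<longleftrightarrow>
     (\<forall>c. c \<notin> shifted_cells lam \<longrightarrow> S c = (0, False)) \<and>
     (\<forall>c\<in>shifted_cells lam. 1 \<le> fst (S c)) \<and>
     (\<forall>i j j'. (i,j) \<in> shifted_cells lam \<and> (i,j') \<in> shifted_cells lam \<and> j \<le> j'
         \<longrightarrow> letter_le (S (i,j)) (S (i,j'))) \<and>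
     (\<forall>i i' j. (i,j) \<in> shifted_cells lam \<and> (i',j) \<in> shifted_cells lam \<and> i \<le> i'
         \<longrightarrow> letter_le (S (i,j)) (S (i',j))) \<and>
     (\<forall>i i' j. (i,j) \<in> shifted_cells lam \<and> (i',j) \<in> shifted_cells lam \<and>
         S (i,j) = S (i',j) \<and> \<not> snd (S (i,j)) \<longrightarrow> i = i') \<and>
     (\<forall>i j j'. (i,j) \<in> shifted_cells lam \<and> (i,j') \<in> shifted_cells lam \<and>
         S (i,j) = S (i,j') \<and> snd (S (i,j)) \<longrightarrow> j = j') \<and>
     (\<forall>i. (i,i) \<in> shifted_cells lam \<longrightarrow> \<not> snd (S (i,i)))"

definition marked_standard :: "nat list \<Rightarrow> nat \<Rightarrow> (cell \<Rightarrow> letter) \<Rightarrow> bool" where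
  "marked_standard lam n S \<longleftrightarrow> marked_shifted_tableau lam S \<and>
     bij_betw (\<lambda>c. fst (S c)) (shifted_cells lam) {1..n}"

definition standard_shifted :: "nat list \<Rightarrow> nat \<Rightarrow> (cell \<Rightarrow> letter) \<Rightarrow> bool" where
  "standard_shifted lam n T \<longleftrightarrow> marked_standard lam n T \<and>
     (\<forall>c\<in>shifted_cells lam. \<not> snd (T c))"

definition unmark :: "(cell \<Rightarrow> letter) \<Rightarrow> (cell \<Rightarrow> letter)" where
  "unmark S = (\<lambda>c. (fst (S c), False))"

definition cell_of :: "nat list \<Rightarrow> (cell \<Rightarrow> letter) \<Rightarrow> nat \<Rightarrow> cell" where
  "cell_of lam S k = (THE c. c \<in> shifted_cells lam \<and> fst (S c) = k)"

definition row_of :: "nat list \<Rightarrow> (cell \<Rightarrow> letter) \<Rightarrow> nat \<Rightarrow> nat" where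
  "row_of lam S k = fst (cell_of lam S k)"

definition primed_of :: "nat list \<Rightarrow> (cell \<Rightarrow> letter) \<Rightarrow> nat \<Rightarrow> bool" where
  "primed_of lam S k = snd (S (cell_of lam S k))"

definition Des :: "nat list \<Rightarrow> nat \<Rightarrow> (cell \<Rightarrow> letter) \<Rightarrow> nat set" where
  "Des lam n S = {i \<in> {1..n-1}.
     (\<not> primed_of lam S i \<and> row_of lam S i < row_of lam S (i+1)) \<or>
     (primed_of lam S (i+1) \<and> row_of lam S (i+1) \<le> row_of lam S i)}"

definition Peak :: "nat set \<Rightarrow> nat set" where
  "Peak D = {i \<in> D. i \<noteq> 1 \<and> i - 1 \<notin> D}"

definition symdiff :: "'a set \<Rightarrow> 'a set \<Rightarrow> 'a set" where
  "symdiff A B = (A - B) \<union> (B - A)"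

definition shift1 :: "nat set \<Rightarrow> nat set" where
  "shift1 D = (\<lambda>d. d + 1) ` D"

end

theory Submission
  imports Defs
begin

text \<open>A marked tableau S with |S| = T is T with the letters of some set A primed, and the only
  constraint is that no diagonal letter is primed; so such S correspond to subsets A of the
  n - \<ell>(\<lambda>) non-diagonal letters. Whether i is a descent of S depends only on whether i+1 lies in
  a lower row than i in T (call this Q i) and on whether i resp. i+1 is primed. Hence Des(S) = D
  fixes the primedness of i when Q i and of i+1 when \<not> Q i; where a letter is constrained twice
  (a peak of T) the two constraints agree exactly because Peak(T) \<subseteq> D \<triangle> (D+1). The constrained
  letters are never diagonal and there are n - 1 - |Peak(T)| of them, leaving
  |Peak(T)| + 1 - \<ell>(\<lambda>) letters whose primes can be chosen freely.\<close>

lemma card_subsets_with_trace: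
  assumes "finite N" and "G \<subseteq> N" and "R \<subseteq> G"
  shows "card {A. A \<subseteq> N \<and> A \<inter> G = R} = 2 ^ card (N - G)"
proof -
  have "{A. A \<subseteq> N \<and> A \<inter> G = R} = (\<union>) R ` Pow (N - G)"
  proof (intro set_eqI iffI)
    fix A assume "A \<in> {A. A \<subseteq> N \<and> A \<inter> G = R}"
    then have "A = R \<union> (A - G)" and "A - G \<in> Pow (N - G)" by auto
    then show "A \<in> (\<union>) R ` Pow (N - G)" by blast
  qed (use assms in auto)
  moreover have "inj_on ((\<union>) R) (Pow (N - G))"
    using assms(3) by (auto intro!: inj_onI)
  ultimately show ?thesis
    using assms(1) by (simp add: card_image card_Pow)
qed

text \<open>The descent set of T with the letters in A primed, where Q i says that i+1 lies in a lower
  row than i; see \<open>Des_prime_letters\<close>.\<close>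

definition marked_descents :: "nat \<Rightarrow> (nat \<Rightarrow> bool) \<Rightarrow> nat set \<Rightarrow> nat set" where
  "marked_descents n Q A = {i\<in>{1..n-1}. (i \<notin> A \<and> Q i) \<or> (i + 1 \<in> A \<and> \<not> Q i)}"

text \<open>The letters k whose primedness is determined by the descent set, through position k
  (if Q k) or position k - 1 (if \<not> Q (k - 1)), and which of them must be primed to get D.\<close>

definition forced_letters :: "nat \<Rightarrow> (nat \<Rightarrow> bool) \<Rightarrow> nat set" where
  "forced_letters n Q = {k\<in>{1..n}. (k \<le> n - 1 \<and> Q k) \<or> (2 \<le> k \<and> \<not> Q (k - 1))}"

definition forced_primes :: "nat \<Rightarrow> (nat \<Rightarrow> bool) \<Rightarrow> nat set \<Rightarrow> nat set" where
  "forced_primes n Q D =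
     {k\<in>forced_letters n Q. if k \<le> n - 1 \<and> Q k then k \<notin> D else k - 1 \<in> D}"

lemma marked_descents_empty: "marked_descents n Q {} = {i\<in>{1..n-1}. Q i}"
  by (simp add: marked_descents_def)

lemma card_forced_letters:
  "card (forced_letters n Q) + card (Peak (marked_descents n Q {})) = n - 1"
proof -
  define DQ where "DQ = marked_descents n Q {}"
  define G2 where "G2 = Suc ` ({1..n-1} - DQ)"
  have DQ_iff: "i \<in> DQ \<longleftrightarrow> i \<in> {1..n-1} \<and> Q i" for i
    by (simp add: DQ_def marked_descents_empty)
  have G2_iff: "k \<in> G2 \<longleftrightarrow> 2 \<le> k \<and> k \<le> n \<and> \<not> Q (k - 1)" for k
    unfolding G2_def by (cases k) (auto simp: image_iff DQ_iff)
  have "forced_letters n Q = DQ \<union> G2"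
    by (auto simp: forced_letters_def G2_iff DQ_iff)
  moreover have "DQ \<inter> G2 = Peak DQ"
    by (auto simp: G2_iff Peak_def DQ_iff)
  moreover have "card G2 = card ({1..n-1} - DQ)"
    by (simp add: G2_def card_image)
  moreover have "DQ \<subseteq> {1..n-1}"
    by (auto simp: DQ_iff)
  moreover have "finite DQ" "finite G2"
    using \<open>DQ \<subseteq> _\<close> by (auto simp: G2_def finite_subset)
  ultimately show ?thesis
    using card_Un_Int[of DQ G2] card_Diff_subset[of DQ "{1..n-1}"] card_mono[of "{1..n-1}" DQ]
    by (simp add: DQ_def)
qed

lemma symdiff_shift1_iff:
  assumes "k \<in> symdiff D (shift1 D)" and "1 \<le> k"
  shows "k \<notin> D \<longleftrightarrow> k - 1 \<in> D"
proof -
  have "k \<in> shift1 D \<longleftrightarrow> k - 1 \<in> D"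
    using assms(2) by (auto simp: shift1_def image_iff intro!: bexI[of _ "k - 1"])
  then show ?thesis
    using assms(1) by (auto simp: symdiff_def)
qed

lemma forced_primes_marked_descents:
  "forced_primes n Q (marked_descents n Q A) = A \<inter> forced_letters n Q"
proof (intro set_eqI iffI)
  fix k assume k: "k \<in> A \<inter> forced_letters n Q"
  show "k \<in> forced_primes n Q (marked_descents n Q A)"
  proof (cases "k \<le> n - 1 \<and> Q k")
    case False
    with k have "k - 1 + 1 = k" "\<not> Q (k - 1)" "k - 1 \<in> {1..n-1}"
      by (auto simp: forced_letters_def)
    with k show ?thesis
      by (auto simp: forced_primes_def marked_descents_def)
  qed (use k in \<open>auto simp: forced_primes_def marked_descents_def\<close>)
next
  fix k assume k: "k \<in> forced_primes n Q (marked_descents n Q A)"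
  show "k \<in> A \<inter> forced_letters n Q"
  proof (cases "k \<le> n - 1 \<and> Q k")
    case True
    with k show ?thesis
      by (auto simp: forced_primes_def marked_descents_def forced_letters_def)
  next
    case False
    with k have "k - 1 + 1 = k" "\<not> Q (k - 1)" "k \<in> forced_letters n Q"
      by (auto simp: forced_letters_def forced_primes_def)
    with k False show ?thesis
      by (auto simp: forced_primes_def marked_descents_def)
  qed
qed

lemma marked_descents_eq_iff:
  assumes D: "D \<subseteq> {1..n-1}"
    and peaks: "Peak (marked_descents n Q {}) \<subseteq> symdiff D (shift1 D)"
  shows "marked_descents n Q A = D \<longleftrightarrow> A \<inter> forced_letters n Q = forced_primes n Q D"
proof
  assume "marked_descents n Q A = D"
  then show "A \<inter> forced_letters n Q = forced_primes n Q D"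
    using forced_primes_marked_descents[of n Q A] by simp
next
  assume trace: "A \<inter> forced_letters n Q = forced_primes n Q D"
  have A: "k \<in> A \<longleftrightarrow> (if k \<le> n - 1 \<and> Q k then k \<notin> D else k - 1 \<in> D)"
    if "k \<in> forced_letters n Q" for k
    using that trace[THEN equalityD1, THEN subsetD, of k] trace[THEN equalityD2, THEN subsetD, of k]
    unfolding forced_primes_def by blast
  have "i \<in> marked_descents n Q A \<longleftrightarrow> i \<in> D" if i: "i \<in> {1..n-1}" for i
  proof (cases "Q i")
    case True
    with i have "i \<in> A \<longleftrightarrow> i \<notin> D"
      by (intro A[THEN trans]) (auto simp: forced_letters_def)
    with True i show ?thesis
      by (simp add: marked_descents_def)
  next
    case False
    have "i + 1 \<notin> D \<longleftrightarrow> i \<in> D" if "i + 1 \<le> n - 1" and "Q (i + 1)"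
    proof -
      have "i + 1 \<in> Peak (marked_descents n Q {})"
        using i that False by (auto simp: Peak_def marked_descents_empty)
      then show ?thesis
        using peaks symdiff_shift1_iff[of "i + 1" D] by auto
    qed
    moreover from False i have "i + 1 \<in> A \<longleftrightarrow>
        (if i + 1 \<le> n - 1 \<and> Q (i + 1) then i + 1 \<notin> D else i \<in> D)"
      by (intro A[THEN trans]) (auto simp: forced_letters_def)
    ultimately have "i + 1 \<in> A \<longleftrightarrow> i \<in> D"
      by presburger
    with False i show ?thesis
      by (simp add: marked_descents_def)
  qed
  moreover have "marked_descents n Q A \<subseteq> {1..n-1}"
    by (auto simp: marked_descents_def)
  ultimately show "marked_descents n Q A = D"
    using D by blast
qed

lemma card_subsets_with_marked_descents:
  assumes "finite N" and "forced_letters n Q \<subseteq> N"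
    and "D \<subseteq> {1..n-1}" and "Peak (marked_descents n Q {}) \<subseteq> symdiff D (shift1 D)"
  shows "card {A. A \<subseteq> N \<and> marked_descents n Q A = D} = 2 ^ card (N - forced_letters n Q)"
proof -
  have "{A. A \<subseteq> N \<and> marked_descents n Q A = D}
      = {A. A \<subseteq> N \<and> A \<inter> forced_letters n Q = forced_primes n Q D}"
    using marked_descents_eq_iff[OF assms(3,4)] by blast
  moreover have "forced_primes n Q D \<subseteq> forced_letters n Q"
    by (auto simp: forced_primes_def)
  ultimately show ?thesis
    using card_subsets_with_trace[OF assms(1,2)] by simp
qed

lemma strict_partition_gap:
  assumes "strict_partition lam" and "r \<le> a" and "a < length lam"
  shows "lam ! a + (a - r) \<le> lam ! r"
  using assms(2,3)
proof (induction a)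
  case (Suc a)
  show ?case
  proof (cases "r = Suc a")
    case False
    with Suc have "lam ! a + (a - r) \<le> lam ! r" and "r \<le> a" by simp_all
    moreover have "lam ! Suc a < lam ! a"
      using assms(1) Suc.prems by (simp add: strict_partition_def sorted_wrt_iff_nth_less)
    ultimately show ?thesis by simp
  qed simp
qed simp

lemma diagonal_in_shifted_cells:
  "strict_partition lam \<Longrightarrow> i < length lam \<Longrightarrow> (i, i) \<in> shifted_cells lam"
  by (simp add: shifted_cells_def strict_partition_def)

lemma shifted_cells_up:
  assumes "strict_partition lam" and "(a, b) \<in> shifted_cells lam" and "r \<le> a"
  shows "(r, b) \<in> shifted_cells lam"
  using assms strict_partition_gap[OF assms(1), of r a] by (auto simp: shifted_cells_def)

lemma letter_le_unprimed_iff: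
  "\<not> snd x \<Longrightarrow> \<not> snd y \<Longrightarrow> letter_le x y \<longleftrightarrow> fst x \<le> fst y"
  by (simp add: letter_le_def letter_rank_def)

lemma letter_le_of_less: "a < b \<Longrightarrow> letter_le (a, p) (b, q)"
  by (auto simp: letter_le_def letter_rank_def)

definition prime_letters :: "nat list \<Rightarrow> (cell \<Rightarrow> letter) \<Rightarrow> nat set \<Rightarrow> cell \<Rightarrow> letter" where
  "prime_letters lam T A = (\<lambda>c. (fst (T c), c \<in> shifted_cells lam \<and> fst (T c) \<in> A))"

lemma fst_prime_letters [simp]: "fst (prime_letters lam T A c) = fst (T c)"
  by (simp add: prime_letters_def)

locale standard_tableau =
  fixes lam :: "nat list" and n :: nat and T :: "cell \<Rightarrow> letter"
  assumes standard: "standard_shifted lam n T"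
    and strict: "strict_partition lam"
begin

lemma marked: "marked_shifted_tableau lam T"
  using standard by (simp add: standard_shifted_def marked_standard_def)

lemma entries_bij: "bij_betw (\<lambda>c. fst (T c)) (shifted_cells lam) {1..n}"
  using standard by (simp add: standard_shifted_def marked_standard_def)

lemma entries_inj: "inj_on (\<lambda>c. fst (T c)) (shifted_cells lam)"
  using entries_bij by (rule bij_betw_imp_inj_on)

lemma entries_image: "(\<lambda>c. fst (T c)) ` shifted_cells lam = {1..n}"
  using entries_bij by (rule bij_betw_imp_surj_on)

lemma entry_unprimed: "c \<in> shifted_cells lam \<Longrightarrow> \<not> snd (T c)"
  using standard unfolding standard_shifted_def by blast

lemma entry_outside: "c \<notin> shifted_cells lam \<Longrightarrow> T c = (0, False)"
  using marked unfolding marked_shifted_tableau_def by blast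

lemma entries_mono_row:
  assumes "(i, j) \<in> shifted_cells lam" and "(i, j') \<in> shifted_cells lam" and "j \<le> j'"
  shows "fst (T (i, j)) \<le> fst (T (i, j'))"
proof -
  have "letter_le (T (i, j)) (T (i, j'))"
    using marked assms unfolding marked_shifted_tableau_def by blast
  then show ?thesis
    using entry_unprimed assms(1,2) by (simp add: letter_le_unprimed_iff)
qed

lemma entries_mono_col:
  assumes "(i, j) \<in> shifted_cells lam" and "(i', j) \<in> shifted_cells lam" and "i \<le> i'"
  shows "fst (T (i, j)) \<le> fst (T (i', j))"
proof -
  have "letter_le (T (i, j)) (T (i', j))"
    using marked assms unfolding marked_shifted_tableau_def by blast
  then show ?thesis
    using entry_unprimed assms(1,2) by (simp add: letter_le_unprimed_iff)
qed

lemma entry_less_of_le: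
  "c \<in> shifted_cells lam \<Longrightarrow> c' \<in> shifted_cells lam \<Longrightarrow> c \<noteq> c'
   \<Longrightarrow> fst (T c) \<le> fst (T c') \<Longrightarrow> fst (T c) < fst (T c')"
  using entries_inj unfolding inj_on_def by (metis order_le_neq_trans)

lemma cell_of_entry: "c \<in> shifted_cells lam \<Longrightarrow> cell_of lam T (fst (T c)) = c"
  unfolding cell_of_def by (rule the_equality) (use entries_inj in \<open>auto simp: inj_on_def\<close>)

lemma cell_of_letter:
  assumes "k \<in> {1..n}"
  shows "cell_of lam T k \<in> shifted_cells lam" and "fst (T (cell_of lam T k)) = k"
proof -
  obtain c where c: "c \<in> shifted_cells lam" "fst (T c) = k"
    using assms entries_image by (metis imageE)
  then have "cell_of lam T k = c"
    using cell_of_entry by blast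
  with c show "cell_of lam T k \<in> shifted_cells lam" and "fst (T (cell_of lam T k)) = k"
    by simp_all
qed

abbreviation row_increases :: "nat \<Rightarrow> bool" where
  "row_increases i \<equiv> row_of lam T i < row_of lam T (i + 1)"

abbreviation diagonal_letters :: "nat set" where
  "diagonal_letters \<equiv> (\<lambda>i. fst (T (i, i))) ` {..<length lam}"

lemma diagonal_letters_subset: "diagonal_letters \<subseteq> {1..n}"
  using entries_image diagonal_in_shifted_cells[OF strict] by auto

lemma card_diagonal_letters: "card diagonal_letters = length lam"
proof -
  have "inj_on (\<lambda>i. fst (T (i, i))) {..<length lam}"
    using entries_inj diagonal_in_shifted_cells[OF strict] by (auto simp: inj_on_def)
  then show ?thesis by (simp add: card_image)
qed

lemma diagonal_entry_bounds:
  assumes "(a, b) \<in> shifted_cells lam" and "r \<le> a"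
  shows "fst (T (r, r)) \<le> fst (T (r, b))" and "fst (T (r, b)) \<le> fst (T (a, b))"
proof -
  have rb: "(r, b) \<in> shifted_cells lam"
    using shifted_cells_up[OF strict assms] .
  moreover have "r < length lam" and "r \<le> b"
    using assms by (auto simp: shifted_cells_def)
  moreover note diagonal_in_shifted_cells[OF strict \<open>r < length lam\<close>]
  ultimately show "fst (T (r, r)) \<le> fst (T (r, b))" and "fst (T (r, b)) \<le> fst (T (a, b))"
    using entries_mono_row entries_mono_col assms by blast+
qed

lemma not_row_increases_diagonal:
  assumes r: "r < length lam" and "fst (T (r, r)) + 1 \<le> n"
  shows "\<not> row_increases (fst (T (r, r)))"
proof
  define k where "k = fst (T (r, r))"
  assume "row_increases (fst (T (r, r)))"
  then have "row_increases k"
    by (simp add: k_def)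
  have rr: "(r, r) \<in> shifted_cells lam"
    using diagonal_in_shifted_cells[OF strict r] .
  obtain a b where ab: "cell_of lam T (k + 1) = (a, b)"
    by (cases "cell_of lam T (k + 1)")
  moreover have "k + 1 \<in> {1..n}"
    using assms(2) by (simp add: k_def)
  ultimately have cell: "(a, b) \<in> shifted_cells lam" and val: "fst (T (a, b)) = k + 1"
    using cell_of_letter by metis+
  with \<open>row_increases k\<close> ab have "r < a"
    by (simp add: row_of_def k_def cell_of_entry[OF rr])
  \<comment> \<open>The cell (r, b), in the row of k and the column of k + 1, would hold a letter strictly between them.\<close>
  with cell have "(r, r) \<noteq> (r, b)" and "(r, b) \<noteq> (a, b)"
    by (auto simp: shifted_cells_def)
  moreover have rb: "(r, b) \<in> shifted_cells lam"
    using shifted_cells_up[OF strict cell] \<open>r < a\<close> by simp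
  ultimately have "k < fst (T (r, b))" and "fst (T (r, b)) < k + 1"
    using entry_less_of_le[OF rr rb] entry_less_of_le[OF rb cell]
      diagonal_entry_bounds[OF cell] \<open>r < a\<close> val k_def by auto
  then show False by simp
qed

lemma row_increases_before_diagonal:
  assumes r: "r < length lam" and "2 \<le> fst (T (r, r))"
  shows "row_increases (fst (T (r, r)) - 1)"
proof (rule ccontr)
  define k where "k = fst (T (r, r))"
  assume "\<not> row_increases (fst (T (r, r)) - 1)"
  then have "\<not> row_increases (k - 1)"
    by (simp add: k_def)
  have rr: "(r, r) \<in> shifted_cells lam"
    using diagonal_in_shifted_cells[OF strict r] .
  have "k \<in> {1..n}"
    using rr entries_image k_def by auto
  obtain a b where ab: "cell_of lam T (k - 1) = (a, b)"
    by (cases "cell_of lam T (k - 1)")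
  moreover have "k - 1 \<in> {1..n}"
    using \<open>k \<in> {1..n}\<close> assms(2) k_def by auto
  ultimately have cell: "(a, b) \<in> shifted_cells lam" and val: "fst (T (a, b)) = k - 1"
    using cell_of_letter by metis+
  from assms(2) have "k - 1 + 1 = k"
    by (simp add: k_def)
  with \<open>\<not> row_increases (k - 1)\<close> ab have "r \<le> a"
    by (simp add: row_of_def k_def cell_of_entry[OF rr])
  then show False
    using diagonal_entry_bounds[OF cell] val assms(2) unfolding k_def by fastforce
qed

lemma forced_letters_subset: "forced_letters n row_increases \<subseteq> {1..n} - diagonal_letters"
  using not_row_increases_diagonal row_increases_before_diagonal
  by (force simp: forced_letters_def)

lemma unmark_prime_letters: "unmark (prime_letters lam T A) = T"
proof
  fix c
  show "unmark (prime_letters lam T A) c = T c"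
  proof (cases "c \<in> shifted_cells lam")
    case True
    then show ?thesis
      using entry_unprimed by (simp add: unmark_def prod_eq_iff)
  next
    case False
    then show ?thesis
      using entry_outside by (simp add: unmark_def)
  qed
qed

lemma letter_le_prime_letters:
  assumes "c \<in> shifted_cells lam" and "c' \<in> shifted_cells lam" and "fst (T c) \<le> fst (T c')"
  shows "letter_le (prime_letters lam T A c) (prime_letters lam T A c')"
proof (cases "c = c'")
  case False
  then have "fst (prime_letters lam T A c) < fst (prime_letters lam T A c')"
    using entry_less_of_le assms by simp
  then show ?thesis
    using letter_le_of_less by (metis prod.collapse)
qed (simp add: letter_le_def)

lemma prime_letters_cell_eq:
  assumes "(i, j) \<in> shifted_cells lam" and "(i', j') \<in> shifted_cells lam"
    and "prime_letters lam T A (i, j) = prime_letters lam T A (i', j')"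
  shows "i = i' \<and> j = j'"
proof -
  have "fst (T (i, j)) = fst (T (i', j'))"
    using assms(3) by (metis fst_prime_letters)
  then show ?thesis
    using inj_on_eq_iff[OF entries_inj assms(1,2)] by simp
qed

lemma marked_standard_prime_letters:
  assumes "A \<inter> diagonal_letters = {}"
  shows "marked_standard lam n (prime_letters lam T A)"
proof -
  let ?S = "prime_letters lam T A"
  have "\<forall>i j j'. (i, j) \<in> shifted_cells lam \<and> (i, j') \<in> shifted_cells lam \<and> j \<le> j'
      \<longrightarrow> letter_le (?S (i, j)) (?S (i, j'))"
   and "\<forall>i i' j. (i, j) \<in> shifted_cells lam \<and> (i', j) \<in> shifted_cells lam \<and> i \<le> i'
      \<longrightarrow> letter_le (?S (i, j)) (?S (i', j))"
    using letter_le_prime_letters entries_mono_row entries_mono_col by blast+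
  moreover have "\<forall>i i' j. (i, j) \<in> shifted_cells lam \<and> (i', j) \<in> shifted_cells lam \<and>
      ?S (i, j) = ?S (i', j) \<and> \<not> snd (?S (i, j)) \<longrightarrow> i = i'"
   and "\<forall>i j j'. (i, j) \<in> shifted_cells lam \<and> (i, j') \<in> shifted_cells lam \<and>
      ?S (i, j) = ?S (i, j') \<and> snd (?S (i, j)) \<longrightarrow> j = j'"
    using prime_letters_cell_eq by blast+
  moreover have "\<forall>i. (i, i) \<in> shifted_cells lam \<longrightarrow> \<not> snd (?S (i, i))"
    using assms by (auto simp: prime_letters_def shifted_cells_def)
  moreover have "\<forall>c. c \<notin> shifted_cells lam \<longrightarrow> ?S c = (0, False)"
    using entry_outside by (simp add: prime_letters_def)
  moreover have "\<forall>c\<in>shifted_cells lam. 1 \<le> fst (?S c)"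
    using marked by (simp add: marked_shifted_tableau_def)
  ultimately have "marked_shifted_tableau lam ?S"
    unfolding marked_shifted_tableau_def by blast
  then show ?thesis
    using entries_bij by (simp add: marked_standard_def)
qed

lemma prime_letters_cases:
  assumes "marked_standard lam n S" and "unmark S = T"
  obtains A where "A \<subseteq> {1..n} - diagonal_letters" and "S = prime_letters lam T A"
proof
  have marked_S: "marked_shifted_tableau lam S"
    using assms(1) by (simp add: marked_standard_def)
  have fst_S: "fst (S c) = fst (T c)" for c
    using fun_cong[OF assms(2), of c] by (simp add: unmark_def prod_eq_iff)
  define A where "A = (\<lambda>c. fst (T c)) ` {c \<in> shifted_cells lam. snd (S c)}"
  have primed_iff: "snd (S c) \<longleftrightarrow> fst (T c) \<in> A" if "c \<in> shifted_cells lam" for c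
    using entries_inj that unfolding A_def inj_on_def by blast
  show "A \<subseteq> {1..n} - diagonal_letters"
  proof -
    have "\<not> snd (S (i, i))" if "i < length lam" for i
      using marked_S diagonal_in_shifted_cells[OF strict that]
      unfolding marked_shifted_tableau_def by blast
    then have "A \<inter> diagonal_letters = {}"
      using primed_iff diagonal_in_shifted_cells[OF strict] by blast
    moreover have "A \<subseteq> {1..n}"
      using entries_image by (auto simp: A_def)
    ultimately show ?thesis by blast
  qed
  show "S = prime_letters lam T A"
  proof
    fix c
    show "S c = prime_letters lam T A c"
    proof (cases "c \<in> shifted_cells lam")
      case True
      then show ?thesis
        using primed_iff fst_S by (simp add: prime_letters_def prod_eq_iff)
    next
      case False
      then have "S c = (0, False)"
        using marked_S unfolding marked_shifted_tableau_def by blast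
      with False show ?thesis
        using entry_outside by (simp add: prime_letters_def)
    qed
  qed
qed

lemma inj_on_prime_letters: "inj_on (prime_letters lam T) (Pow {1..n})"
proof (rule inj_onI)
  fix A B assume "A \<in> Pow {1..n}" and "B \<in> Pow {1..n}"
    and same: "prime_letters lam T A = prime_letters lam T B"
  have "k \<in> A \<longleftrightarrow> k \<in> B" for k
  proof (cases "k \<in> {1..n}")
    case True
    then obtain c where "c \<in> shifted_cells lam" and "fst (T c) = k"
      using entries_image by (metis imageE)
    then show ?thesis
      using fun_cong[OF same, of c] by (simp add: prime_letters_def)
  qed (use \<open>A \<in> Pow {1..n}\<close> \<open>B \<in> Pow {1..n}\<close> in auto)
  then show "A = B"
    by (rule set_eqI)
qed

lemma Des_prime_letters: "Des lam n (prime_letters lam T A) = marked_descents n row_increases A"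
proof -
  have cell_of_eq: "cell_of lam (prime_letters lam T A) = cell_of lam T"
    by (simp add: cell_of_def fun_eq_iff)
  then have row_of_eq: "row_of lam (prime_letters lam T A) = row_of lam T"
    by (simp add: row_of_def fun_eq_iff)
  have primed: "primed_of lam (prime_letters lam T A) k \<longleftrightarrow> k \<in> A" if "k \<in> {1..n}" for k
    using cell_of_letter[OF that] by (simp add: primed_of_def cell_of_eq) (simp add: prime_letters_def)
  show ?thesis
  proof (rule set_eqI)
    fix i
    show "i \<in> Des lam n (prime_letters lam T A) \<longleftrightarrow> i \<in> marked_descents n row_increases A"
    proof (cases "i \<in> {1..n-1}")
      case True
      then have "i \<in> {1..n}" and "i + 1 \<in> {1..n}"
        by auto
      with True show ?thesis
        by (simp add: Des_def marked_descents_def row_of_eq primed not_less)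
    qed (auto simp: Des_def marked_descents_def)
  qed
qed

lemma prime_letters_empty: "prime_letters lam T {} = T"
  using unmark_prime_letters[of "{}"] by (simp add: unmark_def prime_letters_def fun_eq_iff)

lemma Des_standard: "Des lam n T = marked_descents n row_increases {}"
  using Des_prime_letters[of "{}"] by (simp add: prime_letters_empty)

lemma card_markings_with_Des:
  "card {S. marked_standard lam n S \<and> Des lam n S = D \<and> unmark S = T}
     = card {A. A \<subseteq> {1..n} - diagonal_letters \<and> marked_descents n row_increases A = D}"
proof -
  have set_eq: "{S. marked_standard lam n S \<and> Des lam n S = D \<and> unmark S = T}
      = prime_letters lam T ` {A. A \<subseteq> {1..n} - diagonal_letters \<and> marked_descents n row_increases A = D}"
  proof (intro set_eqI iffI)
    fix S assume "S \<in> {S. marked_standard lam n S \<and> Des lam n S = D \<and> unmark S = T}"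
    then have S: "marked_standard lam n S" "Des lam n S = D" "unmark S = T"
      by simp_all
    obtain A where A: "A \<subseteq> {1..n} - diagonal_letters" and S_eq: "S = prime_letters lam T A"
      using prime_letters_cases[OF S(1,3)] by blast
    moreover have "marked_descents n row_increases A = D"
      using S(2) by (simp add: S_eq Des_prime_letters)
    ultimately show "S \<in> prime_letters lam T ` {A. A \<subseteq> {1..n} - diagonal_letters
        \<and> marked_descents n row_increases A = D}"
      by blast
  next
    fix S assume "S \<in> prime_letters lam T `
        {A. A \<subseteq> {1..n} - diagonal_letters \<and> marked_descents n row_increases A = D}"
    then obtain A where A: "A \<subseteq> {1..n} - diagonal_letters" "marked_descents n row_increases A = D"
      and S: "S = prime_letters lam T A"
      by blast
    then have "A \<inter> diagonal_letters = {}"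
      by blast
    with A(2) S show "S \<in> {S. marked_standard lam n S \<and> Des lam n S = D \<and> unmark S = T}"
      by (simp add: marked_standard_prime_letters unmark_prime_letters Des_prime_letters)
  qed
  have "inj_on (prime_letters lam T)
      {A. A \<subseteq> {1..n} - diagonal_letters \<and> marked_descents n row_increases A = D}"
    by (rule inj_on_subset[OF inj_on_prime_letters]) blast
  then show ?thesis
    unfolding set_eq by (rule card_image)
qed

lemma card_free_letters:
  assumes "1 \<le> n"
  shows "int (card ({1..n} - diagonal_letters - forced_letters n row_increases))
    = int (card (Peak (Des lam n T))) + 1 - int (length lam)"
proof -
  have "length lam \<le> n"
    using card_mono[OF _ diagonal_letters_subset] by (simp add: card_diagonal_letters)
  moreover have "card ({1..n} - diagonal_letters) = n - length lam"
    using card_Diff_subset[OF finite_subset[OF diagonal_letters_subset] diagonal_letters_subset]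
    by (simp add: card_diagonal_letters)
  moreover have "card (forced_letters n row_increases) + card (Peak (Des lam n T)) = n - 1"
    using card_forced_letters by (simp add: Des_standard)
  moreover have "card ({1..n} - diagonal_letters - forced_letters n row_increases)
      = card ({1..n} - diagonal_letters) - card (forced_letters n row_increases)"
   and "card (forced_letters n row_increases) \<le> card ({1..n} - diagonal_letters)"
    using forced_letters_subset by (simp_all add: card_Diff_subset card_mono finite_subset)
  ultimately show ?thesis
    using assms by linarith
qed

end

theorem proposition4p6:
  fixes lam :: "nat list" and n :: nat and T :: "cell \<Rightarrow> letter" and D :: "nat set"
  assumes "strict_partition lam" and "sum_list lam = n" and "1 \<le> n"
    and "standard_shifted lam n T"
    and "D \<subseteq> {1..n-1}"
    and "Peak (Des lam n T) \<subseteq> symdiff D (shift1 D)"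
  shows "real (card {S. marked_standard lam n S \<and> Des lam n S = D \<and> unmark S = T})
           = (2::real) powi (int (card (Peak (Des lam n T))) + 1 - int (length lam))"
proof -
  interpret standard_tableau lam n T
    using assms(1,4) by unfold_locales
  have "card {S. marked_standard lam n S \<and> Des lam n S = D \<and> unmark S = T}
      = card {A. A \<subseteq> {1..n} - diagonal_letters \<and> marked_descents n row_increases A = D}"
    by (rule card_markings_with_Des)
  also have "\<dots> = 2 ^ card ({1..n} - diagonal_letters - forced_letters n row_increases)"
    using forced_letters_subset assms(5,6)
    by (intro card_subsets_with_marked_descents) (simp_all add: Des_standard)
  finally show ?thesis
    unfolding card_free_letters[OF assms(3), symmetric] by simp
qed

end
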